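(* Let $1\le r\le K\le d$ and let $\bm{A}=\begin{bmatrix}\widetilde{\bm{A}}&\bm{0}\\\bm{0}&\bm{0}\end{bmatrix}\in\mathbb{R}^{d\times K}$ with $\widetilde{\bm{A}}=\operatorname{diag}(a_1,\ldots,a_r)$, $a_1\ge\cdots\ge a_r>0$. Let $R(\bm{Q})=\bm{A}-\bm{Q}\bm{A}^T\bm{Q}$. For $\bm{Q}\in{\rm St}(d,K)$ partitioned as $\bm{Q}=\begin{bmatrix}\bm{Q}_1&\bm{Q}_2\\\bm{Q}_3&\bm{Q}_4\end{bmatrix}$ with $\bm{Q}_1\in\mathbb{R}^{r\times r}$, $\bm{Q}_2\in\mathbb{R}^{r\times(K-r)}$, $\bm{Q}_3\in\mathbb{R}^{(d-r)\times r}$, $\bm{Q}_4\in\mathbb{R}^{(d-r)\times(K-r)}$, we have $$a_r^2\|\bm{Q}_2\|_F^2\le\|R(\bm{Q})\|_F^2,\qquad a_r^2\|\bm{Q}_3\|_F^2\le\|R(\bm{Q})\|_F^2,\qquad\min_{\bm{V}\in{\rm St}(d-r,K-r)}\|\bm{Q}_4-\bm{V}\|_F^2\le\|\bm{Q}_2\|_F^2.$$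
   Context: ${\rm St}(m,k)=\{\bm{V}\in\mathbb{R}^{m\times k}:\bm{V}^T\bm{V}=\bm{I}_k\}$. *)

theory Defs
  imports Complex_Main "Jordan_Normal_Form.Matrix"
begin

definition fro_norm :: "real mat \<Rightarrow> real" where
  "fro_norm M = sqrt (\<Sum>i<dim_row M. \<Sum>j<dim_col M. (M $$ (i,j))\<^sup>2)"

definition stiefel :: "nat \<Rightarrow> nat \<Rightarrow> real mat set" where
  "stiefel m k = {V \<in> carrier_mat m k. transpose_mat V * V = 1\<^sub>m k}"

definition resid :: "real mat \<Rightarrow> real mat \<Rightarrow> real mat" where
  "resid A Q = A - Q * transpose_mat A * Q"

end

theory Submission
  imports Defs "Jordan_Normal_Form.Char_Poly" "HOL-Computational_Algebra.Fundamental_Theorem_Algebra"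
begin

text \<open>Let \<open>q\<^sub>k\<close> be the orthonormal columns of \<open>Q\<close>. Column \<open>j\<close> of \<open>R(Q)\<close> is column \<open>j\<close>
  of \<open>A\<close> minus a vector in the span of the \<open>q\<^sub>k\<close>, so by Pythagoras
  \<open>\<parallel>R(Q)\<parallel>\<^sup>2 = \<parallel>Q\<^sup>T A - A\<^sup>T Q\<parallel>\<^sup>2 + (\<parallel>A\<parallel>\<^sup>2 - \<parallel>Q\<^sup>T A\<parallel>\<^sup>2)\<close>. In the block of \<open>Q\<^sub>2\<close>,
  \<open>Q\<^sup>T A - A\<^sup>T Q\<close> has the entries \<open>-a\<^sub>i (Q\<^sub>2)\<^sub>i\<^sub>j\<close>, which gives \<open>a\<^sub>r\<^sup>2 \<parallel>Q\<^sub>2\<parallel>\<^sup>2\<close>. The second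
  summand is \<open>\<Sum>\<^sub>i\<^sub><\<^sub>r a\<^sub>i\<^sup>2 (1 - \<parallel>row\<^sub>i Q\<parallel>\<^sup>2) \<ge> 0\<close>, and it is at least
  \<open>a\<^sub>r\<^sup>2 (\<parallel>Q\<^sub>3\<parallel>\<^sup>2 - \<parallel>Q\<^sub>2\<parallel>\<^sup>2)\<close> because the first \<open>r\<close> columns of \<open>Q\<close> are unit vectors;
  adding the two bounds gives the estimate for \<open>Q\<^sub>3\<close>.

  The columns of \<open>[Q\<^sub>2; Q\<^sub>4]\<close> are orthonormal, so \<open>Q\<^sub>4\<close> is a contraction and
  \<open>K - r - \<parallel>Q\<^sub>4\<parallel>\<^sup>2 = \<parallel>Q\<^sub>2\<parallel>\<^sup>2\<close>; the polar factor of \<open>Q\<^sub>4\<close>, built from the spectral theorem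
  for \<open>Q\<^sub>4\<^sup>T Q\<^sub>4\<close>, lies in \<open>St(d - r, K - r)\<close> at squared distance at most
  \<open>K - r - \<parallel>Q\<^sub>4\<parallel>\<^sup>2\<close> from \<open>Q\<^sub>4\<close>.\<close>

lemma sum_lessThan_split_shift:
  assumes "k \<le> (m::nat)"
  shows "(\<Sum>i<m. f i) = (\<Sum>i<k. f i) + (\<Sum>a<m - k. f (a + k))"
proof -
  have "(\<Sum>i<k + n. f i) = (\<Sum>i<k. f i) + (\<Sum>a<n. f (a + k))" for n
    by (induction n) (simp_all add: ac_simps)
  from this[of "m - k"] show ?thesis using assms by simp
qed

lemma sum_lessThan_if_less:
  assumes "r \<le> (K::nat)"
  shows "(\<Sum>j<K. if j < r then f j else 0) = (\<Sum>j<r. f j)"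
proof -
  have "{j \<in> {..<K}. j < r} = {..<r}" using assms by auto
  then show ?thesis using sum.inter_filter[of "{..<K}" f "\<lambda>j. j < r"] by simp
qed

section \<open>Orthonormal families in \<open>\<real>\<^sup>n\<close>\<close>

text \<open>Vectors of \<open>\<real>\<^sup>n\<close> are modelled as functions \<open>nat \<Rightarrow> real\<close> of which only the
  values below \<open>n\<close> matter, and families of vectors as functions \<open>nat \<Rightarrow> nat \<Rightarrow> real\<close>.\<close>

definition dot :: "nat \<Rightarrow> (nat \<Rightarrow> real) \<Rightarrow> (nat \<Rightarrow> real) \<Rightarrow> real" where
  "dot n x y = (\<Sum>l<n. x l * y l)"

definition orthonormal_family :: "nat \<Rightarrow> nat set \<Rightarrow> (nat \<Rightarrow> nat \<Rightarrow> real) \<Rightarrow> bool" where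
  "orthonormal_family n J f \<longleftrightarrow> (\<forall>i\<in>J. \<forall>j\<in>J. dot n (f i) (f j) = (if i = j then 1 else 0))"

text \<open>For an orthonormal family \<open>q\<close> this is the squared distance from \<open>x\<close> to the span
  of \<open>q 0, \<dots>, q (K - 1)\<close>.\<close>

definition span_dist_sq :: "nat \<Rightarrow> nat \<Rightarrow> (nat \<Rightarrow> nat \<Rightarrow> real) \<Rightarrow> (nat \<Rightarrow> real) \<Rightarrow> real" where
  "span_dist_sq n K q x = dot n x x - (\<Sum>j<K. (dot n (q j) x)\<^sup>2)"

lemma dot_commute: "dot n x y = dot n y x"
  unfolding dot_def by (simp add: mult.commute)

lemma dot_self_nonneg: "0 \<le> dot n x x"
  unfolding dot_def by (intro sum_nonneg) auto

lemma dot_self_eq_0D: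
  assumes "dot n x x = 0" and "i < n"
  shows "x i = 0"
proof -
  have "\<forall>l\<in>{..<n}. x l * x l = 0"
    using assms(1) unfolding dot_def by (subst sum_nonneg_eq_0_iff[symmetric]) auto
  then show ?thesis using assms(2) by auto
qed

lemma dot_sum_left: "dot n (\<lambda>l. \<Sum>a\<in>A. c a * f a l) y = (\<Sum>a\<in>A. c a * dot n (f a) y)"
proof -
  have "dot n (\<lambda>l. \<Sum>a\<in>A. c a * f a l) y = (\<Sum>l<n. \<Sum>a\<in>A. c a * (f a l * y l))"
    unfolding dot_def by (simp add: sum_distrib_right mult.assoc)
  also have "\<dots> = (\<Sum>a\<in>A. c a * dot n (f a) y)"
    unfolding dot_def by (subst sum.swap) (simp add: sum_distrib_left)
  finally show ?thesis .
qed

lemma dot_sum_right: "dot n y (\<lambda>l. \<Sum>a\<in>A. c a * f a l) = (\<Sum>a\<in>A. c a * dot n y (f a))"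
  using dot_sum_left[of n c f A y] by (simp add: dot_commute)

lemma dot_add_left: "dot n (\<lambda>l. x l + z l) y = dot n x y + dot n z y"
  unfolding dot_def by (simp add: distrib_right sum.distrib)

lemma dot_add_right: "dot n y (\<lambda>l. x l + z l) = dot n y x + dot n y z"
  unfolding dot_def by (simp add: distrib_left sum.distrib)

lemma dot_diff_left: "dot n (\<lambda>l. x l - z l) y = dot n x y - dot n z y"
  unfolding dot_def by (simp add: left_diff_distrib sum_subtractf)

lemma dot_diff_right: "dot n y (\<lambda>l. x l - z l) = dot n y x - dot n y z"
  unfolding dot_def by (simp add: right_diff_distrib sum_subtractf)

lemma dot_scale_right: "dot n y (\<lambda>l. c * x l) = c * dot n y x"
  unfolding dot_def by (simp add: sum_distrib_left mult.left_commute)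

lemma dot_unit_left: "k < n \<Longrightarrow> dot n (\<lambda>l. if l = k then 1 else 0) y = y k"
  unfolding dot_def by (subst sum.cong[OF refl, of _ _ "\<lambda>l. if l = k then y k else 0"]) auto

lemma dot_unit_right: "k < n \<Longrightarrow> dot n y (\<lambda>l. if l = k then 1 else 0) = y k"
  using dot_unit_left[of k n y] by (simp add: dot_commute)

lemma dot_divide_left: "dot n (\<lambda>l. x l / c) y = dot n x y / c"
  unfolding dot_def by (simp add: sum_divide_distrib)

lemma dot_divide_right: "dot n y (\<lambda>l. x l / c) = dot n y x / c"
  unfolding dot_def by (simp add: sum_divide_distrib)

lemma dot_normalize:
  assumes "0 < dot n x x"
  shows "dot n (\<lambda>l. x l / sqrt (dot n x x)) (\<lambda>l. x l / sqrt (dot n x x)) = 1"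
  using assms by (simp add: dot_divide_left dot_divide_right)

lemma orthonormal_familyD:
  "orthonormal_family n J f \<Longrightarrow> i \<in> J \<Longrightarrow> j \<in> J \<Longrightarrow> dot n (f i) (f j) = (if i = j then 1 else 0)"
  unfolding orthonormal_family_def by blast

lemma orthonormal_sum_dot_left:
  assumes "orthonormal_family n J f" and "finite J" and "a \<in> J"
  shows "(\<Sum>b\<in>J. c b * dot n (f b) (f a)) = c a"
proof -
  have "(\<Sum>b\<in>J. c b * dot n (f b) (f a)) = (\<Sum>b\<in>J. if b = a then c a else 0)"
    using assms(1,3) by (intro sum.cong) (auto simp: orthonormal_familyD)
  then show ?thesis using assms(2,3) by simp
qed

lemma orthonormal_sum_dot_right:
  assumes "orthonormal_family n J f" and "finite J" and "a \<in> J"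
  shows "(\<Sum>b\<in>J. c b * dot n (f a) (f b)) = c a"
  using orthonormal_sum_dot_left[OF assms] by (simp add: dot_commute)

lemma dot_self_orthonormal_combination:
  assumes "orthonormal_family n J f" and "finite J"
  shows "dot n (\<lambda>l. \<Sum>a\<in>J. c a * f a l) (\<lambda>l. \<Sum>a\<in>J. c a * f a l) = (\<Sum>a\<in>J. (c a)\<^sup>2)"
  unfolding dot_sum_left dot_sum_right
  using orthonormal_sum_dot_right[OF assms] by (simp add: power2_eq_square)

lemma orthonormal_family_insert:
  assumes "orthonormal_family n J f" and "dot n w w = 1" and "\<And>j. j \<in> J \<Longrightarrow> dot n w (f j) = 0"
    and "i \<notin> J"
  shows "orthonormal_family n (insert i J) (f(i := w))"
  using assms unfolding orthonormal_family_def by (auto simp: dot_commute)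

text \<open>The projections \<open>P k\<close> of the unit vectors \<open>e\<^sub>k\<close> onto the orthogonal complement of the
  family satisfy \<open>\<Sum>k<n. \<parallel>P k\<parallel>\<^sup>2 = n - card J > 0\<close>, so one of them is nonzero.\<close>

lemma exists_unit_orthogonal:
  assumes fin: "finite J" and orth: "orthonormal_family n J f" and card: "card J < n"
  shows "\<exists>w. dot n w w = 1 \<and> (\<forall>j\<in>J. dot n w (f j) = 0)"
proof -
  define P where "P k = (\<lambda>l. (if l = k then 1 else 0) - (\<Sum>j\<in>J. f j k * f j l))" for k
  have P_orth: "dot n (P k) (f i) = 0" if "k < n" "i \<in> J" for k i
  proof -
    have "dot n (P k) (f i) = f i k - (\<Sum>j\<in>J. f j k * dot n (f j) (f i))"
      unfolding P_def by (simp add: dot_diff_left dot_sum_left dot_unit_left that)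
    then show ?thesis using orthonormal_sum_dot_left[OF orth fin that(2)] by simp
  qed
  have P_self: "dot n (P k) (P k) = P k k" if "k < n" for k
  proof -
    have "dot n (P k) (P k) = dot n (P k) (\<lambda>l. if l = k then 1 else 0) - (\<Sum>j\<in>J. f j k * dot n (P k) (f j))"
      by (subst (2) P_def) (simp add: dot_diff_right dot_sum_right)
    then show ?thesis using P_orth[OF that] by (simp add: dot_unit_right that)
  qed
  have "(\<Sum>k<n. P k k) = real n - (\<Sum>j\<in>J. dot n (f j) (f j))"
    unfolding P_def by (simp add: sum_subtractf dot_def sum.swap[of _ J])
  also have "\<dots> = real n - real (card J)"
    using orth by (simp add: orthonormal_familyD)
  finally have "0 < (\<Sum>k<n. P k k)" using card by simp
  then obtain k where k: "k < n" "0 < P k k"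
    by (metis (no_types, lifting) lessThan_iff not_le sum_nonpos)
  show ?thesis
    using dot_normalize[of n "P k"] P_orth[OF k(1)] P_self[OF k(1)] k(2)
    by (intro exI[of _ "\<lambda>l. P k l / sqrt (dot n (P k) (P k))"]) (simp add: dot_divide_left)
qed

lemma orthonormal_family_extend:
  assumes "J \<subseteq> {..<m}" and "m \<le> n" and "orthonormal_family n J f"
  shows "\<exists>g. orthonormal_family n {..<m} g \<and> (\<forall>j\<in>J. g j = f j)"
  using assms
proof (induction "card ({..<m} - J)" arbitrary: J f)
  case 0
  then have "J = {..<m}" by auto
  with 0 show ?case by blast
next
  case (Suc N)
  obtain i where i: "i < m" "i \<notin> J"
    using Suc.hyps(2) by (metis Diff_iff card.empty ex_in_conv lessThan_iff nat.distinct(1))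
  have fin: "finite J" using Suc.prems(1) finite_subset by blast
  have "card J < m"
    using Suc.prems(1) i by (metis card_lessThan finite_lessThan lessThan_iff psubset_card_mono psubsetI)
  then obtain w where w: "dot n w w = 1" "\<forall>j\<in>J. dot n w (f j) = 0"
    using exists_unit_orthogonal[OF fin Suc.prems(3)] Suc.prems(2) by force
  have "orthonormal_family n (insert i J) (f(i := w))"
    using orthonormal_family_insert[OF Suc.prems(3)] w i by blast
  moreover have "N = card ({..<m} - insert i J)"
    using Suc.hyps(2) i by (simp add: Diff_insert2[symmetric] card_Diff_singleton)
  ultimately obtain g where "orthonormal_family n {..<m} g" "\<forall>j\<in>insert i J. g j = (f(i := w)) j"
    using Suc.hyps(1)[of "insert i J" "f(i := w)"] Suc.prems(1,2) i by auto
  then show ?case using i by (intro exI[of _ g]) auto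
qed

lemma orthonormal_basis_transpose:
  assumes orth: "orthonormal_family m {..<m} u" and "l < m" and "l' < m"
  shows "(\<Sum>a<m. u a l * u a l') = (if l = l' then 1 else 0)"
proof -
  define U where "U = mat m m (\<lambda>(l, a). u a l)"
  have U: "U \<in> carrier_mat m m" unfolding U_def by simp
  have "(transpose_mat U * U) $$ (a, b) = dot m (u a) (u b)" if "a < m" "b < m" for a b
    using that by (simp add: U_def scalar_prod_def dot_def lessThan_atLeast0)
  then have "transpose_mat U * U = 1\<^sub>m m"
    using orth by (intro eq_matI) (auto simp: U_def orthonormal_familyD)
  then have "U * transpose_mat U = 1\<^sub>m m"
    using mat_mult_left_right_inverse[of "transpose_mat U" m U] U by auto
  then show ?thesis
    using assms(2,3) by (auto dest!: arg_cong[where f = "\<lambda>M. M $$ (l, l')"]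
        simp: U_def scalar_prod_def lessThan_atLeast0)
qed

lemma orthonormal_basis_expansion:
  assumes orth: "orthonormal_family m {..<m} u" and l: "l < m"
  shows "(\<Sum>a<m. dot m (u a) y * u a l) = y l"
proof -
  have "(\<Sum>a<m. dot m (u a) y * u a l) = (\<Sum>a<m. \<Sum>l'<m. y l' * (u a l * u a l'))"
    unfolding dot_def by (simp add: sum_distrib_left sum_distrib_right mult_ac)
  also have "\<dots> = (\<Sum>l'<m. y l' * (\<Sum>a<m. u a l * u a l'))"
    by (subst sum.swap) (simp add: sum_distrib_left)
  also have "\<dots> = (\<Sum>l'<m. if l' = l then y l else 0)"
    using orthonormal_basis_transpose[OF orth l] by (intro sum.cong) auto
  also have "\<dots> = y l"
    using l by simp
  finally show ?thesis .
qed

lemma orthonormal_basis_parseval: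
  assumes orth: "orthonormal_family m {..<m} u"
  shows "(\<Sum>a<m. (dot m (u a) y)\<^sup>2) = dot m y y"
proof -
  have "(\<Sum>a<m. (dot m (u a) y)\<^sup>2) = (\<Sum>a<m. \<Sum>l<m. dot m (u a) y * u a l * y l)"
    unfolding power2_eq_square by (subst (2) dot_def) (simp add: sum_distrib_left mult.assoc)
  also have "\<dots> = (\<Sum>l<m. (\<Sum>a<m. dot m (u a) y * u a l) * y l)"
    by (subst sum.swap) (simp add: sum_distrib_right)
  also have "\<dots> = dot m y y"
    by (simp add: orthonormal_basis_expansion[OF orth] dot_def[of m y y])
  finally show ?thesis .
qed

lemma span_dist_sq_add_span:
  assumes orth: "orthonormal_family n {..<K} q"
  shows "span_dist_sq n K q (\<lambda>l. x l + (\<Sum>j<K. c j * q j l)) = span_dist_sq n K q x"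
proof -
  let ?y = "\<lambda>l. x l + (\<Sum>j<K. c j * q j l)"
  have qy: "dot n (q j) ?y = dot n (q j) x + c j" if "j < K" for j
    using orthonormal_sum_dot_right[OF orth _, of j c] that by (simp add: dot_add_right dot_sum_right)
  have xq: "dot n x (q j) = dot n (q j) x" for j
    by (rule dot_commute)
  have "dot n ?y ?y = dot n x x + 2 * (\<Sum>j<K. c j * dot n (q j) x) + (\<Sum>j<K. (c j)\<^sup>2)"
    using dot_self_orthonormal_combination[OF orth, of c]
    by (simp add: dot_add_left dot_add_right dot_sum_left dot_sum_right xq)
  moreover have "(\<Sum>j<K. (dot n (q j) ?y)\<^sup>2)
      = (\<Sum>j<K. (dot n (q j) x)\<^sup>2) + 2 * (\<Sum>j<K. c j * dot n (q j) x) + (\<Sum>j<K. (c j)\<^sup>2)"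
    by (simp add: qy power2_sum sum.distrib sum_distrib_left mult_ac)
  ultimately show ?thesis unfolding span_dist_sq_def by simp
qed

lemma span_dist_sq_nonneg:
  assumes orth: "orthonormal_family n {..<K} q"
  shows "0 \<le> span_dist_sq n K q x"
proof -
  define z where "z = (\<lambda>l. x l - (\<Sum>j<K. dot n (q j) x * q j l))"
  have x: "x = (\<lambda>l. z l + (\<Sum>j<K. dot n (q j) x * q j l))" unfolding z_def by simp
  have "dot n (q j) z = 0" if "j < K" for j
    using orthonormal_sum_dot_right[OF orth _, of j] that
    unfolding z_def by (simp add: dot_diff_right dot_sum_right)
  then have "span_dist_sq n K q z = dot n z z" unfolding span_dist_sq_def by simp
  moreover have "span_dist_sq n K q x = span_dist_sq n K q z"
    by (subst (1) x) (rule span_dist_sq_add_span[OF orth])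
  ultimately show ?thesis using dot_self_nonneg[of n z] by simp
qed

section \<open>The spectral theorem and the singular value decomposition\<close>

lemma symmetric_hermitian_form_real:
  fixes t :: "nat \<Rightarrow> nat \<Rightarrow> real" and z :: "nat \<Rightarrow> complex"
  assumes sym: "\<And>i j. i < p \<Longrightarrow> j < p \<Longrightarrow> t i j = t j i"
  shows "Im (\<Sum>i<p. \<Sum>j<p. complex_of_real (t i j) * (cnj (z i) * z j)) = 0"
proof -
  let ?s = "\<Sum>i<p. \<Sum>j<p. complex_of_real (t i j) * (cnj (z i) * z j)"
  have pointwise: "complex_of_real (t i j) * (z i * cnj (z j)) = complex_of_real (t j i) * (cnj (z j) * z i)"
    if "i < p" "j < p" for i j
    using sym[OF that] by (simp add: mult.commute)
  have "cnj ?s = (\<Sum>i<p. \<Sum>j<p. complex_of_real (t j i) * (cnj (z j) * z i))"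
    unfolding cnj_sum by (simp add: pointwise)
  also have "\<dots> = ?s"
    by (rule sum.swap)
  finally show ?thesis
    by (simp only: complex_is_Real_iff[symmetric] Reals_cnj_iff)
qed

lemma eigenvalue_of_real_mat:
  fixes T :: "real mat"
  assumes T: "T \<in> carrier_mat p p" and ev: "eigenvalue (map_mat complex_of_real T) (complex_of_real \<mu>)"
  shows "eigenvalue T \<mu>"
proof -
  have "poly (map_poly complex_of_real (char_poly T)) (complex_of_real \<mu>) = 0"
    using ev eigenvalue_root_char_poly[of "map_mat complex_of_real T" p] T
    by (simp add: of_real_hom.char_poly_hom[OF T])
  then have "poly (char_poly T) \<mu> = 0"
    by (simp add: of_real_hom.poly_map_poly)
  then show ?thesis using eigenvalue_root_char_poly[OF T] by blast
qed

text \<open>If \<open>v\<close> is a complex eigenvector for \<open>\<lambda>\<close>, then \<open>\<lambda> \<cdot> v\<^sup>* v = v\<^sup>* T v\<close>, and \<open>v\<^sup>* T v\<close> is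
  real because \<open>T\<close> is real symmetric; so \<open>\<lambda>\<close> is a real root of the characteristic polynomial.\<close>

lemma symmetric_mat_real_eigenvalue:
  fixes T :: "real mat"
  assumes T: "T \<in> carrier_mat p p" and p: "0 < p" and sym: "transpose_mat T = T"
  shows "\<exists>\<mu>. eigenvalue T \<mu>"
proof -
  have T_sym: "T $$ (i, j) = T $$ (j, i)" if "i < p" "j < p" for i j
    using that T by (metis carrier_matD index_transpose_mat(1) sym)
  define Tc where "Tc = map_mat complex_of_real T"
  have Tc: "Tc \<in> carrier_mat p p" using T unfolding Tc_def by simp
  have "degree (char_poly Tc) = p" using degree_monic_char_poly[OF Tc] by simp
  then obtain lam where "poly (char_poly Tc) lam = 0"
    using p fundamental_theorem_of_algebra_alt[of "char_poly Tc"] by (metis degree_pCons_0 not_gr0)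
  then have lam: "eigenvalue Tc lam" using eigenvalue_root_char_poly[OF Tc] by simp
  then obtain v where v: "v \<in> carrier_vec p" "v \<noteq> 0\<^sub>v p" "Tc *\<^sub>v v = lam \<cdot>\<^sub>v v"
    unfolding eigenvalue_def eigenvector_def using Tc by auto
  have Tv: "(\<Sum>j<p. complex_of_real (T $$ (i, j)) * v $ j) = lam * v $ i" if "i < p" for i
    using arg_cong[OF v(3), of "\<lambda>w. w $ i"] that Tc T v(1)
    by (simp add: Tc_def scalar_prod_def lessThan_atLeast0)
  define s where "s = (\<Sum>i<p. \<Sum>j<p. complex_of_real (T $$ (i, j)) * (cnj (v $ i) * v $ j))"
  define N where "N = (\<Sum>i<p. (cmod (v $ i))\<^sup>2)"
  have "s = (\<Sum>i<p. cnj (v $ i) * (lam * v $ i))"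
    unfolding s_def by (simp add: sum_distrib_left mult_ac flip: Tv)
  also have "\<dots> = lam * complex_of_real N"
    unfolding N_def of_real_sum sum_distrib_left
    by (intro sum.cong refl) (simp only: complex_norm_square mult_ac)
  finally have "Im lam * N = 0"
    using symmetric_hermitian_form_real[of p "\<lambda>i j. T $$ (i, j)" "\<lambda>i. v $ i", OF T_sym]
    unfolding s_def by simp
  moreover obtain i where "i < p" "v $ i \<noteq> 0"
    using v(1,2) by (metis carrier_vecD eq_vecI index_zero_vec)
  then have "0 < N"
    unfolding N_def by (intro sum_pos2[of _ i]) auto
  ultimately have "lam = complex_of_real (Re lam)" by (simp add: complex_eq_iff)
  then show ?thesis
    using eigenvalue_of_real_mat[OF T] lam unfolding Tc_def by metis
qed

lemma symmetric_unit_eigenvector: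
  assumes p: "0 < p" and sym: "\<And>i j. i < p \<Longrightarrow> j < p \<Longrightarrow> t i j = t j i"
  shows "\<exists>\<mu> z. dot p z z = 1 \<and> (\<forall>l<p. (\<Sum>j<p. t l j * z j) = \<mu> * z l)"
proof -
  define T where "T = mat p p (\<lambda>(i, j). t i j)"
  have T: "T \<in> carrier_mat p p" unfolding T_def by simp
  have "transpose_mat T = T" using sym by (intro eq_matI) (auto simp: T_def)
  then obtain \<mu> where "eigenvalue T \<mu>" using symmetric_mat_real_eigenvalue[OF T p] by blast
  then obtain w where w: "w \<in> carrier_vec p" "w \<noteq> 0\<^sub>v p" "T *\<^sub>v w = \<mu> \<cdot>\<^sub>v w"
    unfolding eigenvalue_def eigenvector_def using T by auto
  define x where "x l = w $ l" for l
  have Tx: "(\<Sum>j<p. t l j * x j) = \<mu> * x l" if "l < p" for l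
    using arg_cong[OF w(3), of "\<lambda>v. v $ l"] that w(1)
    by (simp add: T_def x_def scalar_prod_def lessThan_atLeast0)
  have "dot p x x \<noteq> 0"
    using w(1,2) dot_self_eq_0D[of p x] unfolding x_def by (metis carrier_vecD eq_vecI index_zero_vec)
  then have x_pos: "0 < dot p x x" using dot_self_nonneg[of p x] by linarith
  have "(\<Sum>j<p. t l j * (x j / sqrt (dot p x x))) = \<mu> * (x l / sqrt (dot p x x))" if "l < p" for l
    using Tx[OF that] by (simp add: sum_divide_distrib[symmetric])
  then show ?thesis using dot_normalize[OF x_pos] by blast
qed

lemma dot_symmetric_mat:
  assumes sym: "\<And>i j. i < m \<Longrightarrow> j < m \<Longrightarrow> t i j = t j i"
  shows "dot m x (\<lambda>l. \<Sum>j<m. t l j * y j) = dot m y (\<lambda>l. \<Sum>j<m. t l j * x j)"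
proof -
  have "dot m x (\<lambda>l. \<Sum>j<m. t l j * y j) = (\<Sum>l<m. \<Sum>j<m. x l * t l j * y j)"
    unfolding dot_def by (simp add: sum_distrib_left mult_ac)
  also have "\<dots> = (\<Sum>j<m. \<Sum>l<m. x l * t l j * y j)" by (rule sum.swap)
  also have "\<dots> = dot m y (\<lambda>l. \<Sum>j<m. t l j * x j)"
    unfolding dot_def by (simp add: sum_distrib_left mult_ac sym)
  finally show ?thesis .
qed

lemma symmetric_invariant_complement:
  assumes sym: "\<And>i j. i < m \<Longrightarrow> j < m \<Longrightarrow> t i j = t j i"
    and g: "orthonormal_family m {..<m} g" and k: "k \<le> m"
    and eig: "\<And>a l. a < k \<Longrightarrow> l < m \<Longrightarrow> (\<Sum>j<m. t l j * g a j) = \<mu> a * g a l"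
    and b: "b < m - k" and l: "l < m"
  defines "tg \<equiv> \<lambda>l. \<Sum>j<m. t l j * g (b + k) j"
  shows "tg l = (\<Sum>a<m - k. dot m (g (a + k)) tg * g (a + k) l)"
proof -
  have "dot m (g i) tg = 0" if "i < k" for i
  proof -
    have "dot m (g i) tg = dot m (g (b + k)) (\<lambda>l. \<Sum>j<m. t l j * g i j)"
      unfolding tg_def by (rule dot_symmetric_mat[OF sym])
    also have "\<dots> = dot m (g (b + k)) (\<lambda>l. \<mu> i * g i l)"
      unfolding dot_def using eig[OF that] by (intro sum.cong) auto
    also have "\<dots> = 0"
      using that b by (simp add: dot_scale_right orthonormal_familyD[OF g])
    finally show ?thesis .
  qed
  moreover have "tg l = (\<Sum>i<m. dot m (g i) tg * g i l)"
    using orthonormal_basis_expansion[OF g l] by simp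
  ultimately show ?thesis
    using sum_lessThan_split_shift[OF k, of "\<lambda>i. dot m (g i) tg * g i l"] by simp
qed

lemma invariant_span_eigenvector:
  fixes t :: "nat \<Rightarrow> nat \<Rightarrow> real"
  assumes inv: "\<And>b l. b < p \<Longrightarrow> l < m \<Longrightarrow> (\<Sum>j<m. t l j * f b j) = (\<Sum>a<p. c a b * f a l)"
    and z: "\<And>a. a < p \<Longrightarrow> (\<Sum>b<p. c a b * z b) = \<nu> * z a"
    and l: "l < m"
  shows "(\<Sum>j<m. t l j * (\<Sum>b<p. z b * f b j)) = \<nu> * (\<Sum>b<p. z b * f b l)"
proof -
  have "(\<Sum>j<m. t l j * (\<Sum>b<p. z b * f b j)) = (\<Sum>j<m. \<Sum>b<p. z b * (t l j * f b j))"
    by (simp add: sum_distrib_left mult_ac)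
  also have "\<dots> = (\<Sum>b<p. z b * (\<Sum>j<m. t l j * f b j))"
    by (subst sum.swap) (simp add: sum_distrib_left)
  also have "\<dots> = (\<Sum>b<p. \<Sum>a<p. z b * c a b * f a l)"
    using inv l by (simp add: sum_distrib_left mult.assoc)
  also have "\<dots> = (\<Sum>a<p. (\<Sum>b<p. c a b * z b) * f a l)"
    by (subst sum.swap) (simp add: sum_distrib_left mult_ac)
  also have "\<dots> = \<nu> * (\<Sum>a<p. z a * f a l)"
    using z by (simp add: sum_distrib_left mult_ac)
  finally show ?thesis .
qed

text \<open>The orthogonal complement of the eigenvectors found so far is invariant, so an
  eigenvector of the compression of \<open>t\<close> to it is an eigenvector of \<open>t\<close>.\<close>

lemma symmetric_eigenvectors_extend:
  assumes sym: "\<And>i j. i < m \<Longrightarrow> j < m \<Longrightarrow> t i j = t j i"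
    and k: "k < m" and orth: "orthonormal_family m {..<k} u"
    and eig: "\<And>a l. a < k \<Longrightarrow> l < m \<Longrightarrow> (\<Sum>j<m. t l j * u a j) = \<mu> a * u a l"
  shows "\<exists>x \<nu>. orthonormal_family m {..<Suc k} (u(k := x)) \<and> (\<forall>l<m. (\<Sum>j<m. t l j * x j) = \<nu> * x l)"
proof -
  obtain g where g: "orthonormal_family m {..<m} g" and gu: "\<forall>a<k. g a = u a"
    using orthonormal_family_extend[of "{..<k}" m m u] orth k by auto
  define p where "p = m - k"
  define f where "f b = g (b + k)" for b
  define c where "c a b = dot m (f a) (\<lambda>l. \<Sum>j<m. t l j * f b j)" for a b
  have "c a b = c b a" for a b
    unfolding c_def by (rule dot_symmetric_mat[OF sym])
  then obtain \<nu> z where z: "dot p z z = 1" "\<And>a. a < p \<Longrightarrow> (\<Sum>b<p. c a b * z b) = \<nu> * z a"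
    using symmetric_unit_eigenvector[of p c] k unfolding p_def by auto
  define x where "x l = (\<Sum>b<p. z b * f b l)" for l
  have eig_g: "(\<Sum>j<m. t l j * g a j) = \<mu> a * g a l" if "a < k" "l < m" for a l
    using eig[OF that] gu that(1) by simp
  have inv: "(\<Sum>j<m. t l j * f b j) = (\<Sum>a<p. c a b * f a l)" if "b < p" "l < m" for b l
    using symmetric_invariant_complement[OF sym g _ eig_g, where b = b and l = l] that k
    unfolding p_def c_def f_def by simp
  have tx: "(\<Sum>j<m. t l j * x j) = \<nu> * x l" if "l < m" for l
    unfolding x_def by (rule invariant_span_eigenvector[OF inv z(2) that])
  have xx: "dot m x x = 1"
  proof -
    have "orthonormal_family m {..<p} f"
      using g unfolding f_def p_def orthonormal_family_def by auto
    then have "dot m x x = (\<Sum>b<p. (z b)\<^sup>2)"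
      unfolding x_def by (rule dot_self_orthonormal_combination) simp
    then show ?thesis using z(1) by (simp add: dot_def power2_eq_square)
  qed
  have xu: "dot m x (u i) = 0" if "i \<in> {..<k}" for i
  proof -
    have "dot m x (u i) = (\<Sum>b<p. z b * dot m (g (b + k)) (g i))"
      unfolding x_def f_def dot_sum_left using gu that by simp
    also have "\<dots> = 0"
      using that k by (intro sum.neutral) (auto simp: p_def orthonormal_familyD[OF g])
    finally show ?thesis .
  qed
  have "orthonormal_family m (insert k {..<k}) (u(k := x))"
    using orthonormal_family_insert[OF orth xx xu, of k] by simp
  with tx show ?thesis
    unfolding lessThan_Suc by blast
qed

lemma symmetric_orthonormal_eigenbasis:
  assumes sym: "\<And>i j. i < m \<Longrightarrow> j < m \<Longrightarrow> t i j = t j i"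
  shows "\<exists>u \<mu>. orthonormal_family m {..<m} u \<and> (\<forall>a<m. \<forall>l<m. (\<Sum>j<m. t l j * u a j) = \<mu> a * u a l)"
proof -
  have "\<exists>u \<mu>. orthonormal_family m {..<k} u \<and> (\<forall>a<k. \<forall>l<m. (\<Sum>j<m. t l j * u a j) = \<mu> a * u a l)"
    if "k \<le> m" for k
    using that
  proof (induction k)
    case 0
    show ?case by (auto simp: orthonormal_family_def)
  next
    case (Suc k)
    then obtain u \<mu> where u: "orthonormal_family m {..<k} u"
      and eig: "\<forall>a<k. \<forall>l<m. (\<Sum>j<m. t l j * u a j) = \<mu> a * u a l"
      by auto
    have "k < m" using Suc.prems by simp
    then obtain x \<nu> where x: "orthonormal_family m {..<Suc k} (u(k := x))"
      and "\<forall>l<m. (\<Sum>j<m. t l j * x j) = \<nu> * x l"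
      using symmetric_eigenvectors_extend[OF sym _ u eig[rule_format]] by blast
    then have "\<forall>a<Suc k. \<forall>l<m. (\<Sum>j<m. t l j * (u(k := x)) a j) = (\<mu>(k := \<nu>)) a * (u(k := x)) a l"
      using eig by (auto simp: less_Suc_eq)
    with x show ?case by blast
  qed
  then show ?thesis by blast
qed

lemma dot_mat_image:
  "dot n (\<lambda>i. \<Sum>j<m. M i j * x j) (\<lambda>i. \<Sum>j<m. M i j * y j)
    = dot m x (\<lambda>j. \<Sum>j'<m. (\<Sum>i<n. M i j * M i j') * y j')"
proof -
  have "dot n (\<lambda>i. \<Sum>j<m. M i j * x j) (\<lambda>i. \<Sum>j<m. M i j * y j)
      = (\<Sum>i<n. \<Sum>j<m. \<Sum>j'<m. x j * (M i j * M i j' * y j'))"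
    unfolding dot_def by (simp add: sum_product mult_ac)
  also have "\<dots> = (\<Sum>j<m. \<Sum>i<n. \<Sum>j'<m. x j * (M i j * M i j' * y j'))"
    by (rule sum.swap)
  also have "\<dots> = (\<Sum>j<m. \<Sum>j'<m. \<Sum>i<n. x j * (M i j * M i j' * y j'))"
    by (intro sum.cong refl sum.swap)
  also have "\<dots> = dot m x (\<lambda>j. \<Sum>j'<m. (\<Sum>i<n. M i j * M i j') * y j')"
    unfolding dot_def by (simp add: sum_distrib_left sum_distrib_right mult_ac)
  finally show ?thesis .
qed

text \<open>The right singular vectors \<open>u\<close> are eigenvectors of \<open>M\<^sup>T M\<close>; the images \<open>M u\<^sub>a\<close> are
  orthogonal, and the nonzero ones are normalised and completed to \<open>g\<close>.\<close>

lemma thin_svd: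
  fixes M :: "nat \<Rightarrow> nat \<Rightarrow> real"
  assumes "m \<le> n"
  shows "\<exists>u g \<sigma>. orthonormal_family m {..<m} u \<and> orthonormal_family n {..<m} g \<and>
    (\<forall>a<m. 0 \<le> \<sigma> a \<and> (\<forall>i<n. (\<Sum>j<m. M i j * u a j) = \<sigma> a * g a i))"
proof -
  define s where "s j j' = (\<Sum>i<n. M i j * M i j')" for j j'
  obtain u D where u: "orthonormal_family m {..<m} u"
    and eig: "\<forall>a<m. \<forall>l<m. (\<Sum>j<m. s l j * u a j) = D a * u a l"
    using symmetric_orthonormal_eigenbasis[of m s] by (auto simp: s_def mult.commute)
  define Mu where "Mu a i = (\<Sum>j<m. M i j * u a j)" for a i
  have gram: "dot n (Mu a) (Mu b) = (if a = b then D b else 0)" if "a < m" "b < m" for a b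
  proof -
    have "dot n (Mu a) (Mu b) = dot m (u a) (\<lambda>l. D b * u b l)"
      unfolding Mu_def dot_mat_image s_def[symmetric]
      unfolding dot_def using eig that(2) by (intro sum.cong) auto
    then show ?thesis using that by (simp add: dot_scale_right orthonormal_familyD[OF u])
  qed
  define J where "J = {a. a < m \<and> 0 < D a}"
  define f where "f a i = Mu a i / sqrt (D a)" for a i
  have "orthonormal_family n J f"
    unfolding orthonormal_family_def f_def J_def
    using gram by (auto simp: dot_divide_left dot_divide_right)
  then obtain g where g: "orthonormal_family n {..<m} g" and gf: "\<forall>a\<in>J. g a = f a"
    using orthonormal_family_extend[of J m n f] assms unfolding J_def by auto
  have D_nonneg: "0 \<le> D a" if "a < m" for a
    using gram[OF that that] dot_self_nonneg[of n "Mu a"] by simp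
  have "Mu a i = sqrt (D a) * g a i" if "a < m" "i < n" for a i
  proof (cases "0 < D a")
    case True
    then show ?thesis using gf that unfolding J_def f_def by simp
  next
    case False
    then have "D a = 0" using D_nonneg[OF that(1)] by simp
    then show ?thesis using dot_self_eq_0D[OF _ that(2)] gram[OF that(1) that(1)] by simp
  qed
  then show ?thesis
    using u g D_nonneg unfolding Mu_def by (intro exI[of _ u] exI[of _ g] exI[of _ "\<lambda>a. sqrt (D a)"]) auto
qed

lemma orthonormal_family_compose:
  assumes g: "orthonormal_family n {..<m} g" and u: "orthonormal_family m {..<m} u"
  shows "orthonormal_family n {..<m} (\<lambda>j i. \<Sum>a<m. u a j * g a i)"
  unfolding orthonormal_family_def dot_sum_left dot_sum_right
  using orthonormal_sum_dot_right[OF g] orthonormal_basis_transpose[OF u] by simp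

lemma sum_sq_orthonormal_basis:
  assumes u: "orthonormal_family m {..<m} u"
  shows "(\<Sum>i<n. \<Sum>j<m. (M i j)\<^sup>2) = (\<Sum>a<m. \<Sum>i<n. (\<Sum>j<m. M i j * u a j)\<^sup>2)"
proof -
  have "(\<Sum>j<m. (M i j)\<^sup>2) = (\<Sum>a<m. (dot m (u a) (M i))\<^sup>2)" for i
    using orthonormal_basis_parseval[OF u, of "M i"] by (simp add: dot_def[of m "M i"] power2_eq_square)
  then have "(\<Sum>i<n. \<Sum>j<m. (M i j)\<^sup>2) = (\<Sum>i<n. \<Sum>a<m. (dot m (u a) (M i))\<^sup>2)"
    by simp
  also have "\<dots> = (\<Sum>a<m. \<Sum>i<n. (\<Sum>j<m. M i j * u a j)\<^sup>2)"
    by (subst sum.swap) (simp add: dot_def mult.commute)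
  finally show ?thesis .
qed

lemma sum_mult_polar_factor:
  assumes g: "orthonormal_family n {..<m} g"
    and Mu: "\<And>a i. a < m \<Longrightarrow> i < n \<Longrightarrow> (\<Sum>j<m. M i j * u a j) = \<sigma> a * g a i"
  shows "(\<Sum>i<n. \<Sum>j<m. M i j * (\<Sum>a<m. u a j * g a i)) = (\<Sum>a<m. \<sigma> a)"
proof -
  have "(\<Sum>i<n. \<Sum>j<m. M i j * (\<Sum>a<m. u a j * g a i))
      = (\<Sum>i<n. \<Sum>j<m. \<Sum>a<m. g a i * (M i j * u a j))"
    by (simp add: sum_distrib_left mult_ac)
  also have "\<dots> = (\<Sum>i<n. \<Sum>a<m. \<Sum>j<m. g a i * (M i j * u a j))"
    by (intro sum.cong refl sum.swap)
  also have "\<dots> = (\<Sum>a<m. \<Sum>i<n. g a i * (\<Sum>j<m. M i j * u a j))"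
    by (subst sum.swap) (simp add: sum_distrib_left)
  also have "\<dots> = (\<Sum>a<m. \<sigma> a * dot n (g a) (g a))"
    by (intro sum.cong refl) (simp add: Mu dot_def sum_distrib_left mult_ac)
  also have "\<dots> = (\<Sum>a<m. \<sigma> a)"
    by (simp add: orthonormal_familyD[OF g])
  finally show ?thesis .
qed

text \<open>Writing \<open>M = \<Sum>\<^sub>a \<sigma>\<^sub>a g\<^sub>a u\<^sub>a\<^sup>T\<close>, the polar factor \<open>v = \<Sum>\<^sub>a g\<^sub>a u\<^sub>a\<^sup>T\<close> satisfies
  \<open>\<parallel>M - v\<parallel>\<^sup>2 = \<Sum>\<^sub>a \<sigma>\<^sub>a\<^sup>2 - 2 \<Sum>\<^sub>a \<sigma>\<^sub>a + m\<close>, and \<open>\<sigma>\<^sub>a\<^sup>2 \<le> \<sigma>\<^sub>a\<close> because \<open>M\<close> is a contraction.\<close>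

lemma contraction_near_orthonormal:
  fixes M :: "nat \<Rightarrow> nat \<Rightarrow> real"
  assumes "m \<le> n" and contr: "\<And>x. (\<Sum>i<n. (\<Sum>j<m. M i j * x j)\<^sup>2) \<le> dot m x x"
  shows "\<exists>v. orthonormal_family n {..<m} v \<and>
    (\<Sum>i<n. \<Sum>j<m. (M i j - v j i)\<^sup>2) \<le> real m - (\<Sum>i<n. \<Sum>j<m. (M i j)\<^sup>2)"
proof -
  obtain u g \<sigma> where u: "orthonormal_family m {..<m} u" and g: "orthonormal_family n {..<m} g"
    and \<sigma>: "\<And>a. a < m \<Longrightarrow> 0 \<le> \<sigma> a"
    and Mu: "\<And>a i. a < m \<Longrightarrow> i < n \<Longrightarrow> (\<Sum>j<m. M i j * u a j) = \<sigma> a * g a i"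
    using thin_svd[OF assms(1), of M] by blast
  define v where "v j i = (\<Sum>a<m. u a j * g a i)" for j i
  have image_sq: "(\<Sum>i<n. (\<Sum>j<m. M i j * u a j)\<^sup>2) = (\<sigma> a)\<^sup>2" if "a < m" for a
  proof -
    have "(\<Sum>i<n. (\<Sum>j<m. M i j * u a j)\<^sup>2) = (\<sigma> a)\<^sup>2 * dot n (g a) (g a)"
      using that by (simp add: Mu dot_def power2_eq_square sum_distrib_left mult_ac)
    then show ?thesis using that by (simp add: orthonormal_familyD[OF g])
  qed
  have \<sigma>_sq_le: "(\<sigma> a)\<^sup>2 \<le> \<sigma> a" if "a < m" for a
  proof -
    have "(\<sigma> a)\<^sup>2 \<le> 1"
      using contr[of "u a"] image_sq[OF that] orthonormal_familyD[OF u, of a a] that by simp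
    then have "\<sigma> a \<le> 1" using \<sigma>[OF that] by (simp add: power_le_one_iff)
    then show ?thesis using \<sigma>[OF that] by (simp add: power2_eq_square mult_left_le)
  qed
  have M_sq: "(\<Sum>i<n. \<Sum>j<m. (M i j)\<^sup>2) = (\<Sum>a<m. (\<sigma> a)\<^sup>2)"
    using sum_sq_orthonormal_basis[OF u, where n = n and M = M] image_sq by simp
  have v: "orthonormal_family n {..<m} v"
    unfolding v_def by (rule orthonormal_family_compose[OF g u])
  have v_sq: "(\<Sum>i<n. \<Sum>j<m. (v j i)\<^sup>2) = real m"
    using orthonormal_familyD[OF v] by (subst sum.swap) (simp add: dot_def power2_eq_square)
  have Mv: "(\<Sum>i<n. \<Sum>j<m. M i j * v j i) = (\<Sum>a<m. \<sigma> a)"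
    unfolding v_def by (rule sum_mult_polar_factor[OF g Mu])
  have "(\<Sum>i<n. \<Sum>j<m. (M i j - v j i)\<^sup>2)
      = (\<Sum>i<n. \<Sum>j<m. (M i j)\<^sup>2) - 2 * (\<Sum>i<n. \<Sum>j<m. M i j * v j i) + (\<Sum>i<n. \<Sum>j<m. (v j i)\<^sup>2)"
    by (simp add: power2_diff sum.distrib sum_subtractf sum_distrib_left mult.assoc)
  also have "\<dots> \<le> real m - (\<Sum>i<n. \<Sum>j<m. (M i j)\<^sup>2)"
    unfolding Mv v_sq M_sq using sum_mono[of "{..<m}" "\<lambda>a. (\<sigma> a)\<^sup>2" \<sigma>] \<sigma>_sq_le by simp
  finally show ?thesis using v by blast
qed

section \<open>Frobenius norms of the residual and of the blocks\<close>

lemma fro_norm_sq: "(fro_norm X)\<^sup>2 = (\<Sum>i<dim_row X. \<Sum>j<dim_col X. (X $$ (i, j))\<^sup>2)"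
  unfolding fro_norm_def by (intro real_sqrt_pow2 sum_nonneg) auto

lemma fro_norm_mat_sq: "(fro_norm (mat n m f))\<^sup>2 = (\<Sum>i<n. \<Sum>j<m. (f (i, j))\<^sup>2)"
  unfolding fro_norm_sq by (auto intro!: sum.cong)

lemma transpose_mult_entry:
  assumes "V \<in> carrier_mat n m" and "W \<in> carrier_mat n m'" and "j < m" and "j' < m'"
  shows "(transpose_mat V * W) $$ (j, j') = dot n (\<lambda>i. V $$ (i, j)) (\<lambda>i. W $$ (i, j'))"
  using assms by (simp add: dot_def scalar_prod_def lessThan_atLeast0)

lemma stiefel_orthonormal_columns:
  assumes "Q \<in> stiefel d K"
  shows "orthonormal_family d {..<K} (\<lambda>k i. Q $$ (i, k))"
proof -
  have Q: "Q \<in> carrier_mat d K" "transpose_mat Q * Q = 1\<^sub>m K"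
    using assms by (auto simp: stiefel_def)
  show ?thesis
    unfolding orthonormal_family_def
  proof (intro ballI)
    fix j j' assume "j \<in> {..<K}" "j' \<in> {..<K}"
    then show "dot d (\<lambda>i. Q $$ (i, j)) (\<lambda>i. Q $$ (i, j')) = (if j = j' then 1 else 0)"
      using transpose_mult_entry[OF Q(1) Q(1), of j j'] Q(2) by simp
  qed
qed

lemma orthonormal_columns_stiefel:
  assumes "orthonormal_family n {..<m} v"
  shows "mat n m (\<lambda>(i, j). v j i) \<in> stiefel n m"
proof -
  let ?V = "mat n m (\<lambda>(i, j). v j i)"
  have "(transpose_mat ?V * ?V) $$ (j, j') = dot n (v j) (v j')" if "j < m" "j' < m" for j j'
    using transpose_mult_entry[of ?V n m ?V m j j'] that unfolding dot_def by simp
  then show ?thesis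
    using assms unfolding stiefel_def by (auto intro!: eq_matI simp: orthonormal_familyD)
qed

lemma stiefel_row_norm_le_1:
  assumes "Q \<in> stiefel d K" and "j < d"
  shows "(\<Sum>k<K. (Q $$ (j, k))\<^sup>2) \<le> 1"
proof -
  let ?e = "\<lambda>l. if l = j then 1 else 0"
  have "0 \<le> span_dist_sq d K (\<lambda>k i. Q $$ (i, k)) ?e"
    by (rule span_dist_sq_nonneg[OF stiefel_orthonormal_columns[OF assms(1)]])
  moreover have "dot d ?e ?e = 1"
    using dot_unit_left[OF assms(2)] by simp
  moreover have "dot d (\<lambda>i. Q $$ (i, k)) ?e = Q $$ (j, k)" for k
    using dot_unit_right[OF assms(2)] .
  ultimately show ?thesis unfolding span_dist_sq_def by simp
qed

lemma fro_norm_sq_minus_transpose_mult: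
  assumes A: "A \<in> carrier_mat d K'" and Q: "Q \<in> carrier_mat d K"
  shows "(fro_norm A)\<^sup>2 - (fro_norm (transpose_mat Q * A))\<^sup>2
    = (\<Sum>j<K'. span_dist_sq d K (\<lambda>k i. Q $$ (i, k)) (\<lambda>i. A $$ (i, j)))"
proof -
  have "(fro_norm (transpose_mat Q * A))\<^sup>2 = (\<Sum>j<K'. \<Sum>k<K. (dot d (\<lambda>i. Q $$ (i, k)) (\<lambda>i. A $$ (i, j)))\<^sup>2)"
    unfolding fro_norm_sq using A Q transpose_mult_entry[OF Q A]
    by (subst sum.swap) (simp del: index_mult_mat(1))
  moreover have "(fro_norm A)\<^sup>2 = (\<Sum>j<K'. dot d (\<lambda>i. A $$ (i, j)) (\<lambda>i. A $$ (i, j)))"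
    unfolding fro_norm_sq using A by (subst sum.swap) (simp add: dot_def power2_eq_square)
  ultimately show ?thesis by (simp add: span_dist_sq_def sum_subtractf)
qed

lemma fro_norm_transpose_mult_le:
  assumes "A \<in> carrier_mat d K'" and "Q \<in> stiefel d K"
  shows "(fro_norm (transpose_mat Q * A))\<^sup>2 \<le> (fro_norm A)\<^sup>2"
proof -
  have "0 \<le> (\<Sum>j<K'. span_dist_sq d K (\<lambda>k i. Q $$ (i, k)) (\<lambda>i. A $$ (i, j)))"
    using span_dist_sq_nonneg[OF stiefel_orthonormal_columns[OF assms(2)]] by (simp add: sum_nonneg)
  moreover have "Q \<in> carrier_mat d K" using assms(2) by (simp add: stiefel_def)
  ultimately show ?thesis
    using fro_norm_sq_minus_transpose_mult[OF assms(1)] by fastforce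
qed

lemma resid_entry:
  assumes "A \<in> carrier_mat d K" and "Q \<in> carrier_mat d K" and "i < d" and "j < K"
  shows "resid A Q $$ (i, j) = A $$ (i, j) + (\<Sum>k<K. - (transpose_mat A * Q) $$ (k, j) * Q $$ (i, k))"
proof -
  have "Q * transpose_mat A * Q = Q * (transpose_mat A * Q)"
    using assms by (intro assoc_mult_mat) auto
  then show ?thesis
    using assms by (simp add: resid_def scalar_prod_def lessThan_atLeast0 sum_negf mult.commute)
qed

lemma resid_col_norm_sq:
  assumes A: "A \<in> carrier_mat d K" and Q: "Q \<in> stiefel d K" and j: "j < K"
  shows "(\<Sum>i<d. (resid A Q $$ (i, j))\<^sup>2)
    = (\<Sum>k<K. ((transpose_mat Q * A - transpose_mat A * Q) $$ (k, j))\<^sup>2)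
      + span_dist_sq d K (\<lambda>k i. Q $$ (i, k)) (\<lambda>i. A $$ (i, j))"
proof -
  have Qc: "Q \<in> carrier_mat d K" using Q by (simp add: stiefel_def)
  define q where "q = (\<lambda>k i. Q $$ (i, k))"
  define c where "c k = - (transpose_mat A * Q) $$ (k, j)" for k
  define y where "y i = A $$ (i, j) + (\<Sum>k<K. c k * q k i)" for i
  have q: "orthonormal_family d {..<K} q"
    unfolding q_def by (rule stiefel_orthonormal_columns[OF Q])
  have qy: "dot d (q k) y = (transpose_mat Q * A - transpose_mat A * Q) $$ (k, j)" if k: "k < K" for k
  proof -
    have "dot d (q k) y = dot d (q k) (\<lambda>i. A $$ (i, j)) + c k"
      unfolding y_def dot_add_right dot_sum_right
      using orthonormal_sum_dot_right[OF q _, of k c] k by simp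
    then show ?thesis
      using transpose_mult_entry[OF Qc A k j] k j A Qc
      by (simp add: q_def c_def del: index_mult_mat(1))
  qed
  have "(\<Sum>i<d. (resid A Q $$ (i, j))\<^sup>2) = dot d y y"
    using resid_entry[OF A Qc _ j] by (simp add: dot_def power2_eq_square y_def c_def q_def)
  also have "\<dots> = (\<Sum>k<K. (dot d (q k) y)\<^sup>2) + span_dist_sq d K q y"
    by (simp add: span_dist_sq_def)
  also have "(\<Sum>k<K. (dot d (q k) y)\<^sup>2) = (\<Sum>k<K. ((transpose_mat Q * A - transpose_mat A * Q) $$ (k, j))\<^sup>2)"
    using qy by simp
  also have "span_dist_sq d K q y = span_dist_sq d K q (\<lambda>i. A $$ (i, j))"
    unfolding y_def by (rule span_dist_sq_add_span[OF q])
  finally show ?thesis unfolding q_def .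
qed

lemma resid_fro_norm_sq:
  assumes A: "A \<in> carrier_mat d K" and Q: "Q \<in> stiefel d K"
  shows "(fro_norm (resid A Q))\<^sup>2 = (fro_norm (transpose_mat Q * A - transpose_mat A * Q))\<^sup>2
    + ((fro_norm A)\<^sup>2 - (fro_norm (transpose_mat Q * A))\<^sup>2)"
proof -
  have Qc: "Q \<in> carrier_mat d K" using Q by (simp add: stiefel_def)
  have "dim_row (resid A Q) = d" "dim_col (resid A Q) = K"
    using A Qc by (simp_all add: resid_def)
  then have "(fro_norm (resid A Q))\<^sup>2 = (\<Sum>j<K. \<Sum>i<d. (resid A Q $$ (i, j))\<^sup>2)"
    unfolding fro_norm_sq by (subst sum.swap) simp
  also have "\<dots> = (\<Sum>j<K. \<Sum>k<K. ((transpose_mat Q * A - transpose_mat A * Q) $$ (k, j))\<^sup>2)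
      + (\<Sum>j<K. span_dist_sq d K (\<lambda>k i. Q $$ (i, k)) (\<lambda>i. A $$ (i, j)))"
    by (simp add: resid_col_norm_sq[OF A Q] sum.distrib)
  also have "(\<Sum>j<K. \<Sum>k<K. ((transpose_mat Q * A - transpose_mat A * Q) $$ (k, j))\<^sup>2)
      = (fro_norm (transpose_mat Q * A - transpose_mat A * Q))\<^sup>2"
    unfolding fro_norm_sq using A Qc by (subst sum.swap) simp
  finally show ?thesis
    using fro_norm_sq_minus_transpose_mult[OF A Qc] by simp
qed

lemma split_block_blocks:
  assumes "Q \<in> carrier_mat d K" and "split_block Q r c = (Q1, Q2, Q3, Q4)"
  shows "Q2 = mat r (K - c) (\<lambda>(i, j). Q $$ (i, j + c))"
    and "Q3 = mat (d - r) c (\<lambda>(i, j). Q $$ (i + r, j))"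
    and "Q4 = mat (d - r) (K - c) (\<lambda>(i, j). Q $$ (i + r, j + c))"
  using assms unfolding split_block_def Let_def by auto

lemma block_diag_entries:
  assumes "r \<le> K" and "K \<le> d"
    and "A = four_block_mat (mat r r (\<lambda>(i, j). if i = j then a i else 0))
               (0\<^sub>m r (K - r)) (0\<^sub>m (d - r) r) (0\<^sub>m (d - r) (K - r))"
  shows "A \<in> carrier_mat d K"
    and "\<And>i j. i < d \<Longrightarrow> j < K \<Longrightarrow> A $$ (i, j) = (if i = j \<and> j < r then a j else 0)"
  using assms by auto

lemma block_diag_transpose_mult_entries:
  fixes a :: "nat \<Rightarrow> real"
  assumes rK: "r \<le> K" and Kd: "K \<le> d"
    and A: "A = four_block_mat (mat r r (\<lambda>(i, j). if i = j then a i else 0))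
               (0\<^sub>m r (K - r)) (0\<^sub>m (d - r) r) (0\<^sub>m (d - r) (K - r))"
    and Q: "Q \<in> carrier_mat d K" and k: "k < K" and j: "j < K"
  shows "(transpose_mat Q * A) $$ (k, j) = (if j < r then a j * Q $$ (j, k) else 0)"
    and "(transpose_mat A * Q) $$ (k, j) = (if k < r then a k * Q $$ (k, j) else 0)"
proof -
  note Ac = block_diag_entries(1)[OF rK Kd A] and A_entry = block_diag_entries(2)[OF rK Kd A]
  have "(\<Sum>l<d. Q $$ (l, k) * A $$ (l, j)) = (\<Sum>l<d. if l = j then (if j < r then Q $$ (j, k) * a j else 0) else 0)"
    using j by (intro sum.cong refl) (auto simp: A_entry)
  then show "(transpose_mat Q * A) $$ (k, j) = (if j < r then a j * Q $$ (j, k) else 0)"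
    using transpose_mult_entry[OF Q Ac k j] j Kd unfolding dot_def by (simp add: mult.commute)
  have "(\<Sum>l<d. A $$ (l, k) * Q $$ (l, j)) = (\<Sum>l<d. if l = k then (if k < r then a k * Q $$ (k, j) else 0) else 0)"
    using k by (intro sum.cong refl) (auto simp: A_entry)
  then show "(transpose_mat A * Q) $$ (k, j) = (if k < r then a k * Q $$ (k, j) else 0)"
    using transpose_mult_entry[OF Ac Q k j] k Kd unfolding dot_def by simp
qed

lemma block_diag_commutator_lower_bound:
  fixes a :: "nat \<Rightarrow> real"
  assumes rK: "r \<le> K" and Kd: "K \<le> d"
    and A: "A = four_block_mat (mat r r (\<lambda>(i, j). if i = j then a i else 0))
               (0\<^sub>m r (K - r)) (0\<^sub>m (d - r) r) (0\<^sub>m (d - r) (K - r))"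
    and Q: "Q \<in> carrier_mat d K" and split: "split_block Q r r = (Q1, Q2, Q3, Q4)"
    and \<alpha>: "\<And>j. j < r \<Longrightarrow> \<alpha> \<le> (a j)\<^sup>2"
  shows "\<alpha> * (fro_norm Q2)\<^sup>2 \<le> (fro_norm (transpose_mat Q * A - transpose_mat A * Q))\<^sup>2"
proof -
  let ?C = "transpose_mat Q * A - transpose_mat A * Q"
  have Ac: "A \<in> carrier_mat d K" by (rule block_diag_entries(1)[OF rK Kd A])
  have C_entry: "(?C $$ (k, j + r))\<^sup>2 = (a k)\<^sup>2 * (Q $$ (k, j + r))\<^sup>2" if "k < r" "j < K - r" for k j
    using that rK Ac Q block_diag_transpose_mult_entries[OF rK Kd A Q, of k "j + r"]
    by (simp add: power_mult_distrib)
  have tail: "(\<Sum>j<K - r. (?C $$ (k, j + r))\<^sup>2) \<le> (\<Sum>j<K. (?C $$ (k, j))\<^sup>2)" for k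
    using sum_lessThan_split_shift[OF rK, of "\<lambda>j. (?C $$ (k, j))\<^sup>2"] by (simp add: sum_nonneg)
  have "\<alpha> * (fro_norm Q2)\<^sup>2 = (\<Sum>k<r. \<Sum>j<K - r. \<alpha> * (Q $$ (k, j + r))\<^sup>2)"
    using split_block_blocks(1)[OF Q split] by (simp add: fro_norm_mat_sq sum_distrib_left)
  also have "\<dots> \<le> (\<Sum>k<r. \<Sum>j<K - r. (?C $$ (k, j + r))\<^sup>2)"
    using \<alpha> C_entry by (intro sum_mono) (simp add: mult_right_mono)
  also have "\<dots> \<le> (\<Sum>k<r. \<Sum>j<K. (?C $$ (k, j))\<^sup>2)"
    using tail by (intro sum_mono) simp
  also have "\<dots> \<le> (\<Sum>k<K. \<Sum>j<K. (?C $$ (k, j))\<^sup>2)"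
    using rK by (intro sum_mono2) (auto intro: sum_nonneg)
  also have "\<dots> = (fro_norm ?C)\<^sup>2"
    using Ac Q by (simp add: fro_norm_sq)
  finally show ?thesis .
qed

lemma stiefel_block_row_defect:
  assumes Q: "Q \<in> stiefel d K" and rK: "r \<le> K" and Kd: "K \<le> d"
    and split: "split_block Q r r = (Q1, Q2, Q3, Q4)"
  shows "(\<Sum>j<r. 1 - (\<Sum>k<K. (Q $$ (j, k))\<^sup>2)) = (fro_norm Q3)\<^sup>2 - (fro_norm Q2)\<^sup>2"
proof -
  have Qc: "Q \<in> carrier_mat d K" using Q by (simp add: stiefel_def)
  have rd: "r \<le> d" using rK Kd by simp
  define N1 where "N1 = (\<Sum>j<r. \<Sum>k<r. (Q $$ (j, k))\<^sup>2)"
  have "(\<Sum>j<r. \<Sum>k<K. (Q $$ (j, k))\<^sup>2)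
      = (\<Sum>j<r. (\<Sum>k<r. (Q $$ (j, k))\<^sup>2) + (\<Sum>k<K - r. (Q $$ (j, k + r))\<^sup>2))"
    by (intro sum.cong refl) (rule sum_lessThan_split_shift[OF rK])
  then have rows: "(\<Sum>j<r. \<Sum>k<K. (Q $$ (j, k))\<^sup>2) = N1 + (fro_norm Q2)\<^sup>2"
    using split_block_blocks(1)[OF Qc split] by (simp add: N1_def fro_norm_mat_sq sum.distrib)
  have unit: "(\<Sum>i<d. (Q $$ (i, k))\<^sup>2) = 1" if "k < K" for k
    using orthonormal_familyD[OF stiefel_orthonormal_columns[OF Q], of k k] that
    by (simp add: dot_def power2_eq_square)
  have "real r = (\<Sum>k<r. \<Sum>i<d. (Q $$ (i, k))\<^sup>2)"
    using unit rK by simp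
  also have "\<dots> = (\<Sum>k<r. (\<Sum>i<r. (Q $$ (i, k))\<^sup>2) + (\<Sum>i<d - r. (Q $$ (i + r, k))\<^sup>2))"
    by (intro sum.cong refl) (rule sum_lessThan_split_shift[OF rd])
  also have "\<dots> = (\<Sum>k<r. \<Sum>i<r. (Q $$ (i, k))\<^sup>2) + (\<Sum>k<r. \<Sum>i<d - r. (Q $$ (i + r, k))\<^sup>2)"
    by (simp add: sum.distrib)
  also have "(\<Sum>k<r. \<Sum>i<r. (Q $$ (i, k))\<^sup>2) = N1"
    unfolding N1_def by (rule sum.swap)
  also have "(\<Sum>k<r. \<Sum>i<d - r. (Q $$ (i + r, k))\<^sup>2) = (fro_norm Q3)\<^sup>2"
    unfolding split_block_blocks(2)[OF Qc split] fro_norm_mat_sq by (subst sum.swap) simp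
  finally show ?thesis using rows by (simp add: sum_subtractf)
qed

lemma block_diag_projection_defect_lower_bound:
  fixes a :: "nat \<Rightarrow> real"
  assumes rK: "r \<le> K" and Kd: "K \<le> d"
    and A: "A = four_block_mat (mat r r (\<lambda>(i, j). if i = j then a i else 0))
               (0\<^sub>m r (K - r)) (0\<^sub>m (d - r) r) (0\<^sub>m (d - r) (K - r))"
    and Q: "Q \<in> stiefel d K" and split: "split_block Q r r = (Q1, Q2, Q3, Q4)"
    and \<alpha>: "\<And>j. j < r \<Longrightarrow> \<alpha> \<le> (a j)\<^sup>2"
  shows "\<alpha> * ((fro_norm Q3)\<^sup>2 - (fro_norm Q2)\<^sup>2) \<le> (fro_norm A)\<^sup>2 - (fro_norm (transpose_mat Q * A))\<^sup>2"
proof -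
  have Qc: "Q \<in> carrier_mat d K" using Q by (simp add: stiefel_def)
  note Ac = block_diag_entries(1)[OF rK Kd A] and A_entry = block_diag_entries(2)[OF rK Kd A]
  define \<rho> where "\<rho> j = (\<Sum>k<K. (Q $$ (j, k))\<^sup>2)" for j
  have "(\<Sum>i<d. (A $$ (i, j))\<^sup>2) = (if j < r then (a j)\<^sup>2 else 0)" if "j < K" for j
  proof -
    have "(\<Sum>i<d. (A $$ (i, j))\<^sup>2) = (\<Sum>i<d. if i = j then (if j < r then (a j)\<^sup>2 else 0) else 0)"
      using that by (intro sum.cong refl) (auto simp: A_entry)
    then show ?thesis using that Kd by simp
  qed
  then have "(fro_norm A)\<^sup>2 = (\<Sum>j<r. (a j)\<^sup>2)"
    unfolding fro_norm_sq using Ac rK by (subst sum.swap) (simp add: sum_lessThan_if_less)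
  moreover have "(fro_norm (transpose_mat Q * A))\<^sup>2 = (\<Sum>j<r. (a j)\<^sup>2 * \<rho> j)"
  proof -
    have "(\<Sum>k<K. ((transpose_mat Q * A) $$ (k, j))\<^sup>2) = (if j < r then (a j)\<^sup>2 * \<rho> j else 0)"
      if "j < K" for j
      using that block_diag_transpose_mult_entries(1)[OF rK Kd A Qc _ that]
      by (simp add: \<rho>_def power_mult_distrib sum_distrib_left)
    then show ?thesis
      unfolding fro_norm_sq using Ac Qc rK by (subst sum.swap) (simp add: sum_lessThan_if_less)
  qed
  moreover have "\<alpha> * (1 - \<rho> j) \<le> (a j)\<^sup>2 * (1 - \<rho> j)" if "j < r" for j
    using \<alpha>[OF that] stiefel_row_norm_le_1[OF Q, of j] that rK Kd
    by (intro mult_right_mono) (auto simp: \<rho>_def)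
  then have "\<alpha> * (\<Sum>j<r. 1 - \<rho> j) \<le> (\<Sum>j<r. (a j)\<^sup>2 * (1 - \<rho> j))"
    unfolding sum_distrib_left by (intro sum_mono) simp
  moreover have "(\<Sum>j<r. (a j)\<^sup>2 * (1 - \<rho> j)) = (\<Sum>j<r. (a j)\<^sup>2) - (\<Sum>j<r. (a j)\<^sup>2 * \<rho> j)"
    by (simp add: right_diff_distrib sum_subtractf)
  moreover have "(\<Sum>j<r. 1 - \<rho> j) = (fro_norm Q3)\<^sup>2 - (fro_norm Q2)\<^sup>2"
    unfolding \<rho>_def by (rule stiefel_block_row_defect[OF Q rK Kd split])
  ultimately show ?thesis by simp
qed

lemma stiefel_lower_right_contraction:
  assumes Q: "Q \<in> stiefel d K" and rK: "r \<le> K" and Kd: "K \<le> d"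
  shows "(\<Sum>i<d - r. (\<Sum>j<K - r. Q $$ (i + r, j + r) * x j)\<^sup>2) \<le> dot (K - r) x x"
proof -
  have rd: "r \<le> d" using rK Kd by simp
  have q: "orthonormal_family d {..<K - r} (\<lambda>j i. Q $$ (i, j + r))"
    using stiefel_orthonormal_columns[OF Q] unfolding orthonormal_family_def by auto
  define w where "w l = (\<Sum>j<K - r. x j * Q $$ (l, j + r))" for l
  have "dot d w w = dot (K - r) x x"
    unfolding w_def dot_self_orthonormal_combination[OF q finite_lessThan]
    by (simp add: dot_def power2_eq_square)
  moreover have "dot d w w = (\<Sum>l<r. w l * w l) + (\<Sum>i<d - r. w (i + r) * w (i + r))"
    unfolding dot_def by (rule sum_lessThan_split_shift[OF rd])
  moreover have "0 \<le> (\<Sum>l<r. w l * w l)" by (simp add: sum_nonneg)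
  moreover have "(\<Sum>i<d - r. w (i + r) * w (i + r)) = (\<Sum>i<d - r. (\<Sum>j<K - r. Q $$ (i + r, j + r) * x j)\<^sup>2)"
    by (simp add: w_def power2_eq_square mult.commute)
  ultimately show ?thesis by linarith
qed

lemma stiefel_right_blocks_norm_sq:
  assumes Q: "Q \<in> stiefel d K" and rK: "r \<le> K" and Kd: "K \<le> d"
    and split: "split_block Q r r = (Q1, Q2, Q3, Q4)"
  shows "(fro_norm Q2)\<^sup>2 + (fro_norm Q4)\<^sup>2 = real (K - r)"
proof -
  have Qc: "Q \<in> carrier_mat d K" using Q by (simp add: stiefel_def)
  have rd: "r \<le> d" using rK Kd by simp
  have "(\<Sum>i<r. (Q $$ (i, j + r))\<^sup>2) + (\<Sum>i<d - r. (Q $$ (i + r, j + r))\<^sup>2) = 1" if "j < K - r" for j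
    using orthonormal_familyD[OF stiefel_orthonormal_columns[OF Q], of "j + r" "j + r"] that
      sum_lessThan_split_shift[OF rd, of "\<lambda>i. (Q $$ (i, j + r))\<^sup>2"]
    by (simp add: dot_def power2_eq_square)
  then have "real (K - r) = (\<Sum>j<K - r. \<Sum>i<r. (Q $$ (i, j + r))\<^sup>2)
      + (\<Sum>j<K - r. \<Sum>i<d - r. (Q $$ (i + r, j + r))\<^sup>2)"
    by (simp flip: sum.distrib)
  also have "\<dots> = (fro_norm Q2)\<^sup>2 + (fro_norm Q4)\<^sup>2"
    unfolding split_block_blocks(1,3)[OF Qc split] fro_norm_mat_sq
    by (simp add: sum.swap[of _ "{..<K - r}"])
  finally show ?thesis by simp
qed

lemma stiefel_block_near_stiefel:
  assumes Q: "Q \<in> stiefel d K" and rK: "r \<le> K" and Kd: "K \<le> d"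
    and split: "split_block Q r r = (Q1, Q2, Q3, Q4)"
  shows "\<exists>V\<in>stiefel (d - r) (K - r). (fro_norm (Q4 - V))\<^sup>2 \<le> (fro_norm Q2)\<^sup>2"
proof -
  have Qc: "Q \<in> carrier_mat d K" using Q by (simp add: stiefel_def)
  obtain v where v: "orthonormal_family (d - r) {..<K - r} v"
    and close: "(\<Sum>i<d - r. \<Sum>j<K - r. (Q $$ (i + r, j + r) - v j i)\<^sup>2)
      \<le> real (K - r) - (\<Sum>i<d - r. \<Sum>j<K - r. (Q $$ (i + r, j + r))\<^sup>2)"
    using contraction_near_orthonormal[OF _ stiefel_lower_right_contraction[OF Q rK Kd]] Kd
    by (meson diff_le_mono)
  define V where "V = mat (d - r) (K - r) (\<lambda>(i, j). v j i)"
  have "V \<in> stiefel (d - r) (K - r)"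
    unfolding V_def by (rule orthonormal_columns_stiefel[OF v])
  moreover have "(fro_norm (Q4 - V))\<^sup>2 = (\<Sum>i<d - r. \<Sum>j<K - r. (Q $$ (i + r, j + r) - v j i)\<^sup>2)"
    unfolding split_block_blocks(3)[OF Qc split] V_def fro_norm_sq by simp
  moreover have "(fro_norm Q4)\<^sup>2 = (\<Sum>i<d - r. \<Sum>j<K - r. (Q $$ (i + r, j + r))\<^sup>2)"
    unfolding split_block_blocks(3)[OF Qc split] fro_norm_mat_sq by simp
  ultimately show ?thesis
    using close stiefel_right_blocks_norm_sq[OF Q rK Kd split] by (intro bexI[of _ V]) auto
qed

theorem proposition4:
  fixes r K d :: nat and a :: "nat \<Rightarrow> real" and A Q Q1 Q2 Q3 Q4 :: "real mat"
  assumes "1 \<le> r" and "r \<le> K" and "K \<le> d"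
    and "\<forall>i j. i \<le> j \<and> j < r \<longrightarrow> a j \<le> a i"
    and "a (r - 1) > 0"
    and "A = four_block_mat (mat r r (\<lambda>(i,j). if i = j then a i else 0))
               (0\<^sub>m r (K - r)) (0\<^sub>m (d - r) r) (0\<^sub>m (d - r) (K - r))"
    and "Q \<in> stiefel d K"
    and "split_block Q r r = (Q1, Q2, Q3, Q4)"
  shows "(a (r - 1))\<^sup>2 * (fro_norm Q2)\<^sup>2 \<le> (fro_norm (resid A Q))\<^sup>2
     \<and> (a (r - 1))\<^sup>2 * (fro_norm Q3)\<^sup>2 \<le> (fro_norm (resid A Q))\<^sup>2
     \<and> (INF V \<in> stiefel (d - r) (K - r). (fro_norm (Q4 - V))\<^sup>2) \<le> (fro_norm Q2)\<^sup>2"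
proof -
  have Q: "Q \<in> carrier_mat d K" using assms(7) by (simp add: stiefel_def)
  have A: "A \<in> carrier_mat d K" by (rule block_diag_entries(1)[OF assms(2,3,6)])
  have a_r: "(a (r - 1))\<^sup>2 \<le> (a j)\<^sup>2" if "j < r" for j
    using assms(1,4,5) that by (intro power_mono) auto
  obtain V where V: "V \<in> stiefel (d - r) (K - r)" "(fro_norm (Q4 - V))\<^sup>2 \<le> (fro_norm Q2)\<^sup>2"
    using stiefel_block_near_stiefel[OF assms(7,2,3,8)] by blast
  have "(INF V \<in> stiefel (d - r) (K - r). (fro_norm (Q4 - V))\<^sup>2) \<le> (fro_norm (Q4 - V))\<^sup>2"
    by (rule cINF_lower[OF bdd_belowI2[of _ 0] V(1)]) simp
  moreover have "(fro_norm (resid A Q))\<^sup>2 = (fro_norm (transpose_mat Q * A - transpose_mat A * Q))\<^sup>2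
      + ((fro_norm A)\<^sup>2 - (fro_norm (transpose_mat Q * A))\<^sup>2)"
    by (rule resid_fro_norm_sq[OF A assms(7)])
  moreover have "(a (r - 1))\<^sup>2 * (fro_norm Q2)\<^sup>2
      \<le> (fro_norm (transpose_mat Q * A - transpose_mat A * Q))\<^sup>2"
    by (rule block_diag_commutator_lower_bound[OF assms(2,3,6) Q assms(8) a_r])
  moreover have "(a (r - 1))\<^sup>2 * ((fro_norm Q3)\<^sup>2 - (fro_norm Q2)\<^sup>2)
      \<le> (fro_norm A)\<^sup>2 - (fro_norm (transpose_mat Q * A))\<^sup>2"
    by (rule block_diag_projection_defect_lower_bound[OF assms(2,3,6,7,8) a_r])
  moreover have "(fro_norm (transpose_mat Q * A))\<^sup>2 \<le> (fro_norm A)\<^sup>2"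
    by (rule fro_norm_transpose_mult_le[OF A assms(7)])
  ultimately show ?thesis
    using V(2) by (simp add: right_diff_distrib)
qed

end
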